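(* Let $p,q$ be distinct primes, $n\geqslant1$, and let $S$ be a minimal generating set for a $C_{p^nq}$-transfer system. Let $T$, $B$ and $D$ be the numbers of top, bottom and diagonal arrows in $S$, respectively. Then: (1) $T+B\leqslant n$, and if $T+B=n$ then $\langle S\rangle$ contains the arrow $(0,0;n,0)$; (2) $T+D\leqslant n+1$, and if $T+D=n+1$ then $\langle S\rangle$ contains the arrow $(0,0;n,1)$; (3) $B+D\leqslant n+1$, and if $B+D=n+1$ then $\langle S\rangle$ contains the arrow $(0,0;n,0)$.
   Context: For a finite group $G$, an arrow is a pair $(H,K)$ of subgroups with $H\leqslant K$; identity arrows are those with $H=K$. A $G$-transfer system is a set of arrows containing all identities and closed under composition ($(H,K),(K,L)\Rightarrow(H,L)$), conjugation ($(H,K)\Rightarrow(gHg^{-1},gKg^{-1})$) and restriction ($(H,K)$ and $L\leqslant K\Rightarrow(H\cap L,L)$). For a set $S$ of non-identity arrows, $\langle S\rangle$ is the smallest transfer system containing $S$; $S$ is a minimal generating set of $\mathsf{T}$ if $\langle S\rangle=\mathsf{T}$ and $\langle S\setminus\{s\}\rangle\neq\mathsf{T}$ for all $s\in S$. In $C_{p^nq}$, $C_{p^aq^x}$ ($0\leqslant a\leqslant n$, $x\in\{0,1\}$) denotes the unique subgroup of order $p^aq^x$, and $(a,x;b,y)$ denotes the arrow $(C_{p^aq^x},C_{p^bq^y})$ (requiring $a\leqslant b$, $x\leqslant y$). Top arrows are those of the form $(i,1;j,1)$ with $i<j$; diagonal arrows are those of the form $(i,0;j,1)$ with $i\leqslant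 j$; bottom arrows are those of the form $(i,0;j,0)$ with $i<j$. *)

theory Defs
  imports Main "HOL-Computational_Algebra.Primes"
begin

text \<open>Subgroups of the cyclic group C_{p^n q} (p, q distinct primes) are in
bijection with pairs (a, x), 0 \<le> a \<le> n, x \<in> {0,1}, the pair (a,x) standing for the
unique subgroup C_{p^a q^x} of order p^a q^x.\<close>

type_synonym sgrp = "nat \<times> nat"
type_synonym arrow = "sgrp \<times> sgrp"

definition valid_sg :: "nat \<Rightarrow> sgrp \<Rightarrow> bool" where
  "valid_sg n H \<longleftrightarrow> fst H \<le> n \<and> snd H \<le> 1"

definition sg_le :: "sgrp \<Rightarrow> sgrp \<Rightarrow> bool" where
  "sg_le H K \<longleftrightarrow> fst H \<le> fst K \<and> snd H \<le> snd K"

definition sg_inter :: "sgrp \<Rightarrow> sgrp \<Rightarrow> sgrp" where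
  "sg_inter H K = (min (fst H) (fst K), min (snd H) (snd K))"

definition is_arrow :: "nat \<Rightarrow> arrow \<Rightarrow> bool" where
  "is_arrow n A \<longleftrightarrow> valid_sg n (fst A) \<and> valid_sg n (snd A) \<and> sg_le (fst A) (snd A)"

definition transfer_system :: "nat \<Rightarrow> arrow set \<Rightarrow> bool" where
  "transfer_system n T \<longleftrightarrow>
     (\<forall>A\<in>T. is_arrow n A) \<and>
     (\<forall>H. valid_sg n H \<longrightarrow> (H, H) \<in> T) \<and>
     (\<forall>H K L. (H, K) \<in> T \<longrightarrow> (K, L) \<in> T \<longrightarrow> (H, L) \<in> T) \<and>
     (\<forall>H K L. (H, K) \<in> T \<longrightarrow> valid_sg n L \<longrightarrow> sg_le L K \<longrightarrow> (sg_inter H L, L) \<in> T)"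

text \<open>Conjugation closure is automatic since the group is abelian.\<close>

definition generated :: "nat \<Rightarrow> arrow set \<Rightarrow> arrow set" where
  "generated n S = \<Inter>{T. transfer_system n T \<and> S \<subseteq> T}"

definition minimal_generating_set :: "nat \<Rightarrow> arrow set \<Rightarrow> arrow set \<Rightarrow> bool" where
  "minimal_generating_set n S T \<longleftrightarrow>
     (\<forall>A\<in>S. is_arrow n A \<and> fst A \<noteq> snd A) \<and>
     generated n S = T \<and>
     (\<forall>s\<in>S. generated n (S - {s}) \<noteq> T)"

definition top_arrow :: "arrow \<Rightarrow> bool" where
  "top_arrow A \<longleftrightarrow> (\<exists>i j. A = ((i, 1), (j, 1)) \<and> i < j)"

definition diagonal_arrow :: "arrow \<Rightarrow> bool" where
  "diagonal_arrow A \<longleftrightarrow> (\<exists>i j. A = ((i, 0), (j, 1)) \<and> i \<le> j)"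

definition bottom_arrow :: "arrow \<Rightarrow> bool" where
  "bottom_arrow A \<longleftrightarrow> (\<exists>i j. A = ((i, 0), (j, 0)) \<and> i < j)"

end

(*
  Label the arrows of an irredundant set S of generators. A top arrow (i,1) -> (j,1) gets its
  source i. Any other arrow s from (a,x) into layer y gets its residual reach r(s): the largest c
  with (a,x) -> (c,y) in <S - {s}>. Irredundancy gives a <= r(s) < k for the target (k,y) of s,
  and no other arrow of S that starts in [a, r(s)] and lies over layer y can end beyond r(s),
  since restricting it and composing with (a,x) -> (r(s),y) would stay inside <S - {s}>.
  Hence, for any two of the three kinds of arrows, the labels are pairwise distinct and lie in
  {0..n-1}, resp. {0..n}; for top and diagonal arrows the labels are shifted by one, 0 being
  kept for the unique diagonal without residual reach, and for bottom and diagonal arrows a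
  diagonal is labelled by its source, except the one of largest source, which gets n. When all
  labels are used, every unit step [c, c+1] of the relevant layer lies under an arrow of S, and
  these arrows compose to the long arrow.
*)

theory Submission
  imports Defs
begin

lemma generated_inc: "A \<in> X \<Longrightarrow> A \<in> generated n X"
  by (auto simp: generated_def)

lemma generated_mono: "X \<subseteq> Y \<Longrightarrow> generated n X \<subseteq> generated n Y"
  by (auto simp: generated_def)

lemma generated_minimal: "X \<subseteq> generated n Y \<Longrightarrow> generated n X \<subseteq> generated n Y"
  unfolding generated_def by blast

lemma generated_refl: "valid_sg n H \<Longrightarrow> (H, H) \<in> generated n X"
  unfolding generated_def transfer_system_def by blast

lemma generated_trans:
  "(H, K) \<in> generated n X \<Longrightarrow> (K, L) \<in> generated n X \<Longrightarrow> (H, L) \<in> generated n X"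
  unfolding generated_def transfer_system_def by blast

lemma generated_restrict:
  assumes "((a, x), (b, y)) \<in> generated n X" "c \<le> b" "z \<le> y" "c \<le> n" "z \<le> 1"
  shows "((min a c, min x z), (c, z)) \<in> generated n X"
proof -
  have "(sg_inter (a, x) (c, z), (c, z)) \<in> generated n X"
    using assms unfolding generated_def transfer_system_def valid_sg_def sg_le_def by auto
  then show ?thesis by (simp add: sg_inter_def)
qed

lemma generated_is_arrow:
  assumes "\<And>B. B \<in> X \<Longrightarrow> is_arrow n B" and "A \<in> generated n X"
  shows "is_arrow n A"
proof -
  have "transfer_system n {A. is_arrow n A}"
    unfolding transfer_system_def is_arrow_def valid_sg_def sg_le_def sg_inter_def by auto
  with assms show ?thesis
    unfolding generated_def by blast
qed

lemma generated_extend: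
  assumes "((a, x), (r, y)) \<in> generated n X" "((b, z), (k, y)) \<in> generated n X"
    and "a \<le> b" "b \<le> r" "x \<le> z" "z \<le> y" "b \<le> n" "y \<le> 1"
  shows "((a, x), (k, y)) \<in> generated n X"
proof -
  have "((a, x), (b, z)) \<in> generated n X"
    using generated_restrict[OF assms(1), of b z] assms(3-) by (simp add: min_absorb1)
  then show ?thesis
    using assms(2) by (rule generated_trans)
qed

definition step_spanned :: "nat \<Rightarrow> arrow set \<Rightarrow> nat \<Rightarrow> nat \<Rightarrow> bool" where
  "step_spanned n G y c \<longleftrightarrow>
     (\<exists>a x b w. a \<le> c \<and> c < b \<and> b \<le> n \<and> y \<le> w \<and> ((a, x), (b, w)) \<in> G)"

lemma generated_chain:
  assumes "y \<le> 1" and "((0, 0), (0, y)) \<in> generated n X"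
    and "\<And>c. c < n \<Longrightarrow> step_spanned n (generated n X) y c"
  shows "((0, 0), (n, y)) \<in> generated n X"
proof -
  have "m \<le> n \<Longrightarrow> ((0, 0), (m, y)) \<in> generated n X" for m
  proof (induction m)
    case 0
    show ?case by (fact assms(2))
  next
    case (Suc m)
    then have m: "m < n" "((0, 0), (m, y)) \<in> generated n X" by auto
    obtain a x b w where ab: "a \<le> m" "m < b" "b \<le> n" "y \<le> w" "((a, x), (b, w)) \<in> generated n X"
      using assms(3)[OF m(1)] unfolding step_spanned_def by blast
    have "((a, min x y), (b, y)) \<in> generated n X"
      using generated_restrict[OF ab(5), of b y] ab assms(1) by simp
    then have "((0, 0), (b, y)) \<in> generated n X"
      by (rule generated_extend[OF m(2)]) (use ab m assms(1) in auto)
    from generated_restrict[OF this, of "Suc m" y] show ?case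
      using ab assms(1) by simp
  qed
  then show ?thesis by simp
qed

definition reach :: "nat \<Rightarrow> arrow set \<Rightarrow> sgrp \<Rightarrow> nat \<Rightarrow> nat" where
  "reach n G H y = Max {c. c \<le> n \<and> (H, (c, y)) \<in> G}"

lemma
  assumes "c \<le> n" "(H, (c, y)) \<in> G"
  shows reach_in: "(H, (reach n G H y, y)) \<in> G"
    and reach_ge: "c \<le> reach n G H y"
proof -
  have fin: "finite {c. c \<le> n \<and> (H, (c, y)) \<in> G}"
    by (rule finite_subset[of _ "{..n}"]) auto
  have c: "c \<in> {c. c \<le> n \<and> (H, (c, y)) \<in> G}"
    using assms by simp
  show "(H, (reach n G H y, y)) \<in> G"
    using Max_in[OF fin] c unfolding reach_def by blast
  show "c \<le> reach n G H y"
    unfolding reach_def using Max_ge[OF fin c] .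
qed

lemma card_le_of_disjoint_labels:
  assumes "finite X" "finite Y" "inj_on f X" "inj_on g Y" "f ` X \<inter> g ` Y = {}"
    and "finite M" "f ` X \<subseteq> M" "g ` Y \<subseteq> M"
  shows "card X + card Y \<le> card M"
    and "card X + card Y = card M \<Longrightarrow> f ` X \<union> g ` Y = M"
proof -
  have card: "card X + card Y = card (f ` X \<union> g ` Y)"
    using assms(1-5) by (simp add: card_Un_disjoint card_image)
  show "card X + card Y \<le> card M"
    unfolding card using assms(6-8) by (simp add: card_mono)
  show "f ` X \<union> g ` Y = M" if "card X + card Y = card M"
    using card_subset_eq[OF assms(6)] assms(7,8) that unfolding card by simp
qed

lemma top_arrowE:
  assumes "top_arrow A"
  obtains i j where "A = ((i, 1), (j, 1))" "i < j"
  using assms by (auto simp: top_arrow_def)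

lemma bottom_arrowE:
  assumes "bottom_arrow A"
  obtains a k where "A = ((a, 0), (k, 0))" "a < k"
  using assms by (auto simp: bottom_arrow_def)

lemma diagonal_arrowE:
  assumes "diagonal_arrow A"
  obtains i j where "A = ((i, 0), (j, 1))" "i \<le> j"
  using assms by (auto simp: diagonal_arrow_def)

locale irredundant_arrows =
  fixes n :: nat and S :: "arrow set"
  assumes arrow: "A \<in> S \<Longrightarrow> is_arrow n A"
    and irredundant: "s \<in> S \<Longrightarrow> s \<notin> generated n (S - {s})"
begin

abbreviation residual :: "arrow \<Rightarrow> arrow set" where
  "residual s \<equiv> generated n (S - {s})"

abbreviation tops :: "arrow set" where
  "tops \<equiv> {A\<in>S. top_arrow A}"

abbreviation bottoms :: "arrow set" where
  "bottoms \<equiv> {A\<in>S. bottom_arrow A}"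

abbreviation diagonals :: "arrow set" where
  "diagonals \<equiv> {A\<in>S. diagonal_arrow A}"

lemma arrow_bounds: "((a, x), (b, y)) \<in> S \<Longrightarrow> a \<le> b \<and> x \<le> y \<and> b \<le> n \<and> y \<le> 1"
  using arrow by (fastforce simp: is_arrow_def valid_sg_def sg_le_def)

lemma finite_arrows: "finite S"
proof (rule finite_subset)
  show "S \<subseteq> ({..n} \<times> {..1}) \<times> ({..n} \<times> {..1})"
    using arrow by (force simp: is_arrow_def valid_sg_def)
qed auto

lemma in_residual: "t \<in> S \<Longrightarrow> t \<noteq> s \<Longrightarrow> t \<in> residual s"
  by (auto intro: generated_inc)

lemma residual_is_arrow: "A \<in> residual s \<Longrightarrow> is_arrow n A"
  by (rule generated_is_arrow[of "S - {s}"]) (auto intro: arrow)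

lemma step_spanned_by_arrow:
  "((a, x), (b, w)) \<in> S \<Longrightarrow> a \<le> c \<Longrightarrow> c < b \<Longrightarrow> y \<le> w \<Longrightarrow> step_spanned n (generated n S) y c"
  unfolding step_spanned_def using arrow_bounds by (blast intro: generated_inc)

lemma same_source_eq:
  assumes "((a, x), (k, y)) \<in> S" "((a, x), (k', y)) \<in> S"
  shows "k = k'"
proof -
  have False if s: "((a, x), (k1, y)) \<in> S" and t: "((a, x), (k2, y)) \<in> S" and "k1 < k2" for k1 k2
  proof -
    have "((a, x), (k2, y)) \<in> residual ((a, x), (k1, y))"
      using t \<open>k1 < k2\<close> by (intro in_residual) auto
    from generated_restrict[OF this, of k1 y] have "((a, x), (k1, y)) \<in> residual ((a, x), (k1, y))"
      using arrow_bounds[OF s] \<open>k1 < k2\<close> by (simp add: min_absorb1)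
    with irredundant[OF s] show False by simp
  qed
  with assms show ?thesis
    by (metis linorder_neqE_nat)
qed

definition rooted :: "arrow \<Rightarrow> bool" where
  "rooted s \<longleftrightarrow> (\<exists>c\<le>n. (fst s, (c, snd (snd s))) \<in> residual s)"

text \<open>For an arrow that is not rooted, \<open>residual_reach\<close> is the junk value \<open>Max {}\<close>.\<close>
definition residual_reach :: "arrow \<Rightarrow> nat" where
  "residual_reach s = reach n (residual s) (fst s) (snd (snd s))"

lemma rooted_same_layer: "((a, x), (k, x)) \<in> S \<Longrightarrow> rooted ((a, x), (k, x))"
proof -
  assume s: "((a, x), (k, x)) \<in> S"
  have "((a, x), (a, x)) \<in> residual ((a, x), (k, x))"
    using arrow_bounds[OF s] by (intro generated_refl) (simp add: valid_sg_def)
  with arrow_bounds[OF s] show ?thesis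
    unfolding rooted_def by (auto intro!: exI[of _ a])
qed

context
  fixes a x k y
  assumes s: "((a, x), (k, y)) \<in> S" and rooted: "rooted ((a, x), (k, y))"
begin

lemma residual_reach_in: "((a, x), (residual_reach ((a, x), (k, y)), y)) \<in> residual ((a, x), (k, y))"
  using rooted unfolding rooted_def residual_reach_def by (auto intro: reach_in)

lemma residual_reach_ge_source: "a \<le> residual_reach ((a, x), (k, y))"
  using residual_is_arrow[OF residual_reach_in] by (simp add: is_arrow_def sg_le_def)

lemma residual_reach_less_target: "residual_reach ((a, x), (k, y)) < k"
proof (rule ccontr)
  assume "\<not> ?thesis"
  with arrow_bounds[OF s] generated_restrict[OF residual_reach_in, of k y]
  have "((a, x), (k, y)) \<in> residual ((a, x), (k, y))"
    by (simp add: min_absorb1)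
  with irredundant[OF s] show False by simp
qed

lemma residual_reach_outside:
  assumes t: "((i, z), (j, w)) \<in> S" "((i, z), (j, w)) \<noteq> ((a, x), (k, y))"
    and "x \<le> z" "y \<le> w" "a \<le> i" "i \<le> residual_reach ((a, x), (k, y))"
  shows "j \<le> residual_reach ((a, x), (k, y))"
proof -
  have ij: "i \<le> j" "j \<le> n" "x \<le> y" "y \<le> 1"
    using arrow_bounds[OF t(1)] arrow_bounds[OF s] by auto
  have "((i, min z y), (j, y)) \<in> residual ((a, x), (k, y))"
    using generated_restrict[OF in_residual[OF t], of j y] assms(4) ij by simp
  then have "((a, x), (j, y)) \<in> residual ((a, x), (k, y))"
    by (rule generated_extend[OF residual_reach_in]) (use assms ij in auto)
  then show ?thesis
    unfolding residual_reach_def using reach_ge ij by simp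
qed

lemma residual_reach_ne_source:
  assumes "((i, z), (j, w)) \<in> S" "((i, z), (j, w)) \<noteq> ((a, x), (k, y))"
    and "x \<le> z" "y \<le> w" "i < j"
  shows "residual_reach ((a, x), (k, y)) \<noteq> i"
  using residual_reach_outside[OF assms(1-4)] residual_reach_ge_source assms(5) by force

lemma step_spanned_residual_reach: "step_spanned n (generated n S) y (residual_reach ((a, x), (k, y)))"
  using residual_reach_ge_source residual_reach_less_target by (intro step_spanned_by_arrow[OF s]) auto

end

lemma residual_reach_inj:
  assumes "((a, x), (k, y)) \<in> S" "rooted ((a, x), (k, y))"
    and "((a', x), (k', y)) \<in> S" "rooted ((a', x), (k', y))"
    and "residual_reach ((a, x), (k, y)) = residual_reach ((a', x), (k', y))"
  shows "((a, x), (k, y)) = ((a', x), (k', y))"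
proof -
  have False if s: "((a, x), (k, y)) \<in> S" "rooted ((a, x), (k, y))"
    and t: "((a', x), (k', y)) \<in> S" "rooted ((a', x), (k', y))"
    and eq: "residual_reach ((a, x), (k, y)) = residual_reach ((a', x), (k', y))"
    and "a \<le> a'" and ne: "((a', x), (k', y)) \<noteq> ((a, x), (k, y))" for a k a' k'
    using residual_reach_outside[OF s t(1) ne] \<open>a \<le> a'\<close>
      residual_reach_ge_source[OF t] residual_reach_less_target[OF t] eq by auto
  with assms show ?thesis
    by (metis nle_le)
qed

lemma diagonal_rooted:
  assumes d: "((i, 0), (j, 1)) \<in> S" and d': "((i', 0), (j', 1)) \<in> S"
    and "i \<le> i'" and "(i', j') \<noteq> (i, j)"
  shows "((i, 0), (i, 1)) \<in> residual ((i, 0), (j, 1))"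
proof -
  have "((i', 0), (j', 1)) \<in> residual ((i, 0), (j, 1))"
    using d' \<open>(i', j') \<noteq> (i, j)\<close> by (intro in_residual) auto
  from generated_restrict[OF this, of i 1] show ?thesis
    using arrow_bounds[OF d'] \<open>i \<le> i'\<close> by (simp add: min_absorb2)
qed

lemma diagonal_proper:
  assumes d: "((i, 0), (j, 1)) \<in> S" and d': "((i', 0), (j', 1)) \<in> S" and "i < i'"
  shows "i < j"
proof (rule ccontr)
  assume "\<not> i < j"
  with arrow_bounds[OF d] have "j = i" by simp
  with diagonal_rooted[OF d d'] irredundant[OF d] \<open>i < i'\<close> show False by simp
qed

lemma unrooted_diagonal_unique:
  assumes "((i, 0), (j, 1)) \<in> S" "\<not> rooted ((i, 0), (j, 1))"
    and "((i', 0), (j', 1)) \<in> S" "\<not> rooted ((i', 0), (j', 1))"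
  shows "(i, j) = (i', j')"
proof -
  have "rooted ((i, 0), (j, 1))"
    if "((i, 0), (j, 1)) \<in> S" "((i', 0), (j', 1)) \<in> S" "i \<le> i'" "(i', j') \<noteq> (i, j)" for i j i' j'
    using diagonal_rooted[OF that] arrow_bounds[OF that(1)] unfolding rooted_def by (auto intro!: exI[of _ i])
  with assms show ?thesis
    by (metis nle_le)
qed

lemma inj_on_source_tops: "inj_on (\<lambda>A. fst (fst A)) tops"
  by (auto simp: inj_on_def top_arrow_def dest: same_source_eq)

lemma source_tops_subset: "(\<lambda>A. fst (fst A)) ` tops \<subseteq> {..<n}"
  using arrow_bounds by (fastforce elim: top_arrowE)

lemma inj_on_residual_reach_bottoms: "inj_on residual_reach bottoms"
proof (rule inj_onI)
  fix A B assume "A \<in> bottoms" "B \<in> bottoms" and eq: "residual_reach A = residual_reach B"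
  then obtain a k a' k' where A: "A = ((a, 0), (k, 0))" "((a, 0), (k, 0)) \<in> S"
    and B: "B = ((a', 0), (k', 0))" "((a', 0), (k', 0)) \<in> S"
    by (auto elim!: bottom_arrowE)
  show "A = B"
    using residual_reach_inj[OF A(2) rooted_same_layer[OF A(2)] B(2) rooted_same_layer[OF B(2)]] eq
    unfolding A(1) B(1) by simp
qed

lemma residual_reach_bottoms_subset: "residual_reach ` bottoms \<subseteq> {..<n}"
proof
  fix c assume "c \<in> residual_reach ` bottoms"
  then obtain a k where "((a, 0), (k, 0)) \<in> S" "c = residual_reach ((a, 0), (k, 0))"
    by (auto elim!: bottom_arrowE)
  with residual_reach_less_target[OF _ rooted_same_layer] arrow_bounds show "c \<in> {..<n}"
    by fastforce
qed

lemma source_tops_residual_reach_bottoms_disjoint: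
  "(\<lambda>A. fst (fst A)) ` tops \<inter> residual_reach ` bottoms = {}"
proof -
  have "fst (fst A) \<noteq> residual_reach B" if "A \<in> tops" "B \<in> bottoms" for A B
  proof -
    from that obtain i j a k where A: "A = ((i, 1), (j, 1))" "((i, 1), (j, 1)) \<in> S" "i < j"
      and B: "B = ((a, 0), (k, 0))" "((a, 0), (k, 0)) \<in> S"
      by (auto elim!: top_arrowE bottom_arrowE)
    show ?thesis
      using residual_reach_ne_source[OF B(2) rooted_same_layer[OF B(2)] A(2)] A(3)
      unfolding A(1) B(1) by auto
  qed
  then show ?thesis by blast
qed

lemma card_tops_bottoms:
  shows "card tops + card bottoms \<le> n"
    and "card tops + card bottoms = n \<Longrightarrow> ((0, 0), (n, 0)) \<in> generated n S"
proof -
  have fin: "finite tops" "finite bottoms"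
    using finite_arrows by simp_all
  note count = card_le_of_disjoint_labels[OF fin inj_on_source_tops inj_on_residual_reach_bottoms
      source_tops_residual_reach_bottoms_disjoint finite_lessThan source_tops_subset
      residual_reach_bottoms_subset]
  show "card tops + card bottoms \<le> n"
    using count(1) by simp
  assume "card tops + card bottoms = n"
  then have labels: "(\<lambda>A. fst (fst A)) ` tops \<union> residual_reach ` bottoms = {..<n}"
    using count(2) by simp
  show "((0, 0), (n, 0)) \<in> generated n S"
  proof (rule generated_chain)
    show "((0, 0), (0, 0)) \<in> generated n S"
      by (rule generated_refl) (simp add: valid_sg_def)
    fix c assume "c < n"
    with labels have "c \<in> (\<lambda>A. fst (fst A)) ` tops \<union> residual_reach ` bottoms"
      by simp
    then show "step_spanned n (generated n S) 0 c"
      by (auto elim!: top_arrowE bottom_arrowE intro: step_spanned_by_arrow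
          step_spanned_residual_reach[OF _ rooted_same_layer])
  qed simp
qed

definition reach_label :: "arrow \<Rightarrow> nat" where
  "reach_label A = (if rooted A then Suc (residual_reach A) else 0)"

lemma inj_on_reach_label_diagonals: "inj_on reach_label diagonals"
proof (rule inj_onI)
  fix A B assume "A \<in> diagonals" "B \<in> diagonals" and eq: "reach_label A = reach_label B"
  then obtain a k a' k' where A: "A = ((a, 0), (k, 1))" "((a, 0), (k, 1)) \<in> S"
    and B: "B = ((a', 0), (k', 1))" "((a', 0), (k', 1)) \<in> S"
    by (auto elim!: diagonal_arrowE)
  show "A = B"
  proof (cases "rooted A")
    case True
    with eq have "rooted B" and "residual_reach A = residual_reach B"
      by (auto simp: reach_label_def split: if_splits)
    with True show ?thesis
      using residual_reach_inj[OF A(2) _ B(2)] unfolding A(1) B(1) by blast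
  next
    case False
    with eq have "\<not> rooted B"
      by (auto simp: reach_label_def split: if_splits)
    with False show ?thesis
      using unrooted_diagonal_unique[OF A(2) _ B(2)] unfolding A(1) B(1) by simp
  qed
qed

lemma reach_label_diagonals_subset: "reach_label ` diagonals \<subseteq> {..n}"
proof
  fix c assume "c \<in> reach_label ` diagonals"
  then obtain a k where "((a, 0), (k, 1)) \<in> S" "c = reach_label ((a, 0), (k, 1))"
    by (auto elim!: diagonal_arrowE)
  with residual_reach_less_target arrow_bounds show "c \<in> {..n}"
    by (fastforce simp: reach_label_def)
qed

lemma source_tops_reach_label_diagonals_disjoint:
  "(\<lambda>A. Suc (fst (fst A))) ` tops \<inter> reach_label ` diagonals = {}"
proof -
  have "Suc (fst (fst A)) \<noteq> reach_label B" if "A \<in> tops" "B \<in> diagonals" for A B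
  proof -
    from that obtain i j a k where A: "A = ((i, 1), (j, 1))" "((i, 1), (j, 1)) \<in> S" "i < j"
      and B: "B = ((a, 0), (k, 1))" "((a, 0), (k, 1)) \<in> S"
      by (auto elim!: top_arrowE diagonal_arrowE)
    show ?thesis
      using residual_reach_ne_source[OF B(2) _ A(2)] A(3)
      unfolding A(1) B(1) reach_label_def by auto
  qed
  then show ?thesis by blast
qed

lemma card_tops_diagonals:
  shows "card tops + card diagonals \<le> n + 1"
    and "card tops + card diagonals = n + 1 \<Longrightarrow> ((0, 0), (n, 1)) \<in> generated n S"
proof -
  have fin: "finite tops" "finite diagonals"
    using finite_arrows by simp_all
  have inj_tops: "inj_on (\<lambda>A. Suc (fst (fst A))) tops"
    using inj_on_source_tops by (simp add: inj_on_def)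
  have tops_subset: "(\<lambda>A. Suc (fst (fst A))) ` tops \<subseteq> {..n}"
    using source_tops_subset by auto
  note count = card_le_of_disjoint_labels[OF fin inj_tops inj_on_reach_label_diagonals
      source_tops_reach_label_diagonals_disjoint finite_atMost tops_subset
      reach_label_diagonals_subset]
  show "card tops + card diagonals \<le> n + 1"
    using count(1) by simp
  assume "card tops + card diagonals = n + 1"
  then have labels: "(\<lambda>A. Suc (fst (fst A))) ` tops \<union> reach_label ` diagonals = {..n}"
    using count(2) by simp
  show "((0, 0), (n, 1)) \<in> generated n S"
  proof (rule generated_chain)
    have "0 \<in> reach_label ` diagonals"
      using labels by auto
    then obtain a k where "((a, 0), (k, 1)) \<in> S"
      by (auto elim!: diagonal_arrowE)
    from generated_restrict[OF generated_inc[OF this], of 0 1]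
    show "((0, 0), (0, 1)) \<in> generated n S"
      by simp
  next
    fix c assume "c < n"
    with labels have "Suc c \<in> (\<lambda>A. Suc (fst (fst A))) ` tops \<union> reach_label ` diagonals"
      by simp
    then show "step_spanned n (generated n S) 1 c"
      by (auto simp: reach_label_def split: if_splits elim!: top_arrowE diagonal_arrowE
          intro: step_spanned_by_arrow step_spanned_residual_reach)
  qed simp
qed

definition dominated :: "nat \<Rightarrow> bool" where
  "dominated a \<longleftrightarrow> (\<exists>i j. ((i, 0), (j, 1)) \<in> S \<and> a < i)"

definition source_label :: "arrow \<Rightarrow> nat" where
  "source_label A = (if dominated (fst (fst A)) then fst (fst A) else n)"

lemma dominated_less: "dominated a \<Longrightarrow> a < n"
  using arrow_bounds unfolding dominated_def by fastforce

lemma inj_on_source_label_diagonals: "inj_on source_label diagonals"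
proof (rule inj_onI)
  fix A B assume "A \<in> diagonals" "B \<in> diagonals" and eq: "source_label A = source_label B"
  then obtain a k a' k' where A: "A = ((a, 0), (k, 1))" "((a, 0), (k, 1)) \<in> S"
    and B: "B = ((a', 0), (k', 1))" "((a', 0), (k', 1)) \<in> S"
    by (auto elim!: diagonal_arrowE)
  have "a = a'"
  proof (cases "dominated a"; cases "dominated a'")
    assume "\<not> dominated a" "\<not> dominated a'"
    with A(2) B(2) show "a = a'"
      unfolding dominated_def by (metis linorder_neqE_nat)
  qed (use eq dominated_less in \<open>auto simp: A(1) B(1) source_label_def split: if_splits\<close>)
  with A B same_source_eq show "A = B"
    by blast
qed

lemma source_label_diagonals_subset: "source_label ` diagonals \<subseteq> {..n}"
  using dominated_less by (auto simp: source_label_def intro: less_imp_le)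

lemma residual_reach_bottoms_source_label_diagonals_disjoint:
  "residual_reach ` bottoms \<inter> source_label ` diagonals = {}"
proof -
  have "residual_reach A \<noteq> source_label B" if "A \<in> bottoms" "B \<in> diagonals" for A B
  proof -
    from that obtain a k i j where A: "A = ((a, 0), (k, 0))" "((a, 0), (k, 0)) \<in> S"
      and B: "B = ((i, 0), (j, 1))" "((i, 0), (j, 1)) \<in> S"
      by (auto elim!: bottom_arrowE diagonal_arrowE)
    note rooted = rooted_same_layer[OF A(2)]
    show ?thesis
    proof (cases "dominated i")
      case True
      then have "i < j"
        using diagonal_proper[OF B(2)] unfolding dominated_def by blast
      then show ?thesis
        using residual_reach_ne_source[OF A(2) rooted B(2)] True
        unfolding A(1) B(1) source_label_def by auto
    next
      case False
      then show ?thesis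
        using residual_reach_less_target[OF A(2) rooted] arrow_bounds[OF A(2)]
        unfolding A(1) B(1) source_label_def by auto
    qed
  qed
  then show ?thesis by blast
qed

lemma card_bottoms_diagonals:
  shows "card bottoms + card diagonals \<le> n + 1"
    and "card bottoms + card diagonals = n + 1 \<Longrightarrow> ((0, 0), (n, 0)) \<in> generated n S"
proof -
  have fin: "finite bottoms" "finite diagonals"
    using finite_arrows by simp_all
  have bottoms_subset: "residual_reach ` bottoms \<subseteq> {..n}"
    using residual_reach_bottoms_subset by auto
  note count = card_le_of_disjoint_labels[OF fin inj_on_residual_reach_bottoms
      inj_on_source_label_diagonals residual_reach_bottoms_source_label_diagonals_disjoint
      finite_atMost bottoms_subset source_label_diagonals_subset]
  show "card bottoms + card diagonals \<le> n + 1"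
    using count(1) by simp
  assume "card bottoms + card diagonals = n + 1"
  then have labels: "residual_reach ` bottoms \<union> source_label ` diagonals = {..n}"
    using count(2) by simp
  show "((0, 0), (n, 0)) \<in> generated n S"
  proof (rule generated_chain)
    show "((0, 0), (0, 0)) \<in> generated n S"
      by (rule generated_refl) (simp add: valid_sg_def)
    fix c assume "c < n"
    with labels have "c \<in> residual_reach ` bottoms \<union> source_label ` diagonals"
      by simp
    then consider (bottom) a k where "((a, 0), (k, 0)) \<in> S" "c = residual_reach ((a, 0), (k, 0))"
      | (diagonal) j where "((c, 0), (j, 1)) \<in> S" "dominated c"
      using \<open>c < n\<close> by (auto simp: source_label_def split: if_splits elim!: bottom_arrowE diagonal_arrowE)
    then show "step_spanned n (generated n S) 0 c"
    proof cases
      case bottom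
      then show ?thesis
        using step_spanned_residual_reach[OF bottom(1) rooted_same_layer[OF bottom(1)]] by simp
    next
      case diagonal
      then have "c < j"
        using diagonal_proper unfolding dominated_def by blast
      then show ?thesis
        by (intro step_spanned_by_arrow[OF diagonal(1)]) auto
    qed
  qed simp
qed

end

lemma minimal_generating_set_irredundant:
  assumes "minimal_generating_set n S T"
  shows "irredundant_arrows n S"
proof
  show "is_arrow n A" if "A \<in> S" for A
    using assms that unfolding minimal_generating_set_def by blast
  show "s \<notin> generated n (S - {s})" if s: "s \<in> S" for s
  proof
    assume "s \<in> generated n (S - {s})"
    then have "S \<subseteq> generated n (S - {s})"
      by (auto intro: generated_inc)
    then have "generated n S \<subseteq> generated n (S - {s})"
      by (rule generated_minimal)
    moreover have "generated n (S - {s}) \<subseteq> generated n S"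
      by (rule generated_mono) auto
    ultimately show False
      using assms s unfolding minimal_generating_set_def by auto
  qed
qed

theorem lemma6p3:
  fixes p q n :: nat and S T :: "arrow set"
  assumes "prime p" and "prime q" and "p \<noteq> q" and "n \<ge> 1"
    and "transfer_system n T"
    and "minimal_generating_set n S T"
  defines "Tn \<equiv> card {A\<in>S. top_arrow A}"
    and "Bn \<equiv> card {A\<in>S. bottom_arrow A}"
    and "Dn \<equiv> card {A\<in>S. diagonal_arrow A}"
  shows "(Tn + Bn \<le> n \<and> (Tn + Bn = n \<longrightarrow> ((0, 0), (n, 0)) \<in> generated n S))
       \<and> (Tn + Dn \<le> n + 1 \<and> (Tn + Dn = n + 1 \<longrightarrow> ((0, 0), (n, 1)) \<in> generated n S))
       \<and> (Bn + Dn \<le> n + 1 \<and> (Bn + Dn = n + 1 \<longrightarrow> ((0, 0), (n, 0)) \<in> generated n S))"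
proof -
  interpret irredundant_arrows n S
    using assms(6) by (rule minimal_generating_set_irredundant)
  show ?thesis
    unfolding Tn_def Bn_def Dn_def
    using card_tops_bottoms card_tops_diagonals card_bottoms_diagonals by blast
qed

end
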